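(* Let $Q$ be a quiver without oriented cycles, $\mathbf D=k\tilde Q/\mathcal I$, $i$ a source of $Q$, and $M$ a $\Delta$-filtered $\mathbf D$-module with $d_i=(\underline{\dim}_\Delta M)_i>0$. Then $M$ has a unique submodule isomorphic to $\Delta(i)^{d_i}$, and the quotient $M/\Delta(i)^{d_i}$ is $\Delta$-filtered.
   Context: $k$ is an algebraically closed field. $\tilde Q$ is the double of $Q$ (arrows $\alpha\in Q_1$ and $\alpha^*:t(\alpha)\to s(\alpha)$), paths composed right to left; $\mathcal I\subseteq k\tilde Q$ is generated by $\alpha^*\alpha-\sum_{\gamma\in Q_1,t(\gamma)=s(\alpha)}\gamma\gamma^*$ ($\alpha\in Q_1$) and $\beta^*\alpha$ ($\alpha\ne\beta\in Q_1$, $t(\alpha)=t(\beta)$). $\Delta(i)$ is the indecomposable projective $kQ$-module with top $L(i)$, a $\mathbf D$-module via $\mathbf D\to kQ$ (killing the $\alpha^*$). $\Delta$-filtered: has a filtration by submodules with successive quotients among the $\Delta(j)$ (equivalently, projective as a $kQ$-module). $\underline{\dim}_\Delta(M)_i$ is the multiplicity of $\Delta(i)$ in such a filtration. A source is a vertex at which no arrow of $Q$ ends. *)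

theory Defs
  imports "HOL-Computational_Algebra.Polynomial"
begin

definition alg_closed :: "'k::field itself \<Rightarrow> bool" where
  "alg_closed _ \<longleftrightarrow> (\<forall>p :: 'k poly. degree p \<ge> 1 \<longrightarrow> (\<exists>x. poly p x = 0))"

text \<open>A finite quiver Q: vertices of type 'v, arrows of type 'a, source map s, target map t.
  Arrows of the double quiver: Inl a = a, Inr a = a^*.\<close>
fun ds :: "('a \<Rightarrow> 'v) \<Rightarrow> ('a \<Rightarrow> 'v) \<Rightarrow> 'a + 'a \<Rightarrow> 'v" where
  "ds s t (Inl a) = s a" | "ds s t (Inr a) = t a"
fun dt :: "('a \<Rightarrow> 'v) \<Rightarrow> ('a \<Rightarrow> 'v) \<Rightarrow> 'a + 'a \<Rightarrow> 'v" where
  "dt s t (Inl a) = t a" | "dt s t (Inr a) = s a"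

text \<open>Paths of Q, listed in traversal order: qpath s t u p v means p is a path from u to v.\<close>
fun qpath :: "('a \<Rightarrow> 'v) \<Rightarrow> ('a \<Rightarrow> 'v) \<Rightarrow> 'v \<Rightarrow> 'a list \<Rightarrow> 'v \<Rightarrow> bool" where
  "qpath s t u [] v = (u = v)"
| "qpath s t u (a # ps) v = (s a = u \<and> qpath s t (t a) ps v)"

text \<open>A representation of the double quiver: at vertex v the vector space k^(qbas v)
  (functions supported on the finite basis set qbas v), each double arrow acting by a
  matrix qcoef a (indexed by basis elements: row y, column x).\<close>
record ('v, 'a, 'b, 'k) qrep =
  qbas :: "'v \<Rightarrow> 'b set"
  qcoef :: "'a + 'a \<Rightarrow> 'b \<Rightarrow> 'b \<Rightarrow> 'k"

definition vsp :: "('v, 'a, 'b, 'k::field) qrep \<Rightarrow> 'v \<Rightarrow> ('b \<Rightarrow> 'k) set" where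
  "vsp R v = {f. \<forall>x. x \<notin> qbas R v \<longrightarrow> f x = 0}"

definition act :: "('a \<Rightarrow> 'v) \<Rightarrow> ('a \<Rightarrow> 'v) \<Rightarrow> ('v, 'a, 'b, 'k::field) qrep
    \<Rightarrow> 'a + 'a \<Rightarrow> ('b \<Rightarrow> 'k) \<Rightarrow> ('b \<Rightarrow> 'k)" where
  "act s t R a f = (\<lambda>y. if y \<in> qbas R (dt s t a)
       then (\<Sum>x\<in>qbas R (ds s t a). qcoef R a y x * f x) else 0)"

text \<open>Modules over D = kQ~/I: finite-dimensional representations of the double quiver
  satisfying the relations (paths composed right to left).\<close>
definition D_module :: "('a \<Rightarrow> 'v) \<Rightarrow> ('a \<Rightarrow> 'v) \<Rightarrow> ('v, 'a, 'b, 'k::field) qrep \<Rightarrow> bool" where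
  "D_module s t R \<longleftrightarrow>
     (\<forall>v. finite (qbas R v)) \<and>
     (\<forall>\<alpha> f. f \<in> vsp R (s \<alpha>) \<longrightarrow>
        act s t R (Inr \<alpha>) (act s t R (Inl \<alpha>) f)
        = (\<lambda>y. \<Sum>\<gamma>\<in>{\<gamma>. t \<gamma> = s \<alpha>}. act s t R (Inl \<gamma>) (act s t R (Inr \<gamma>) f) y)) \<and>
     (\<forall>\<alpha> \<beta> f. \<alpha> \<noteq> \<beta> \<and> t \<alpha> = t \<beta> \<and> f \<in> vsp R (s \<alpha>) \<longrightarrow>
        act s t R (Inr \<beta>) (act s t R (Inl \<alpha>) f) = (\<lambda>_. 0))"

definition subsp :: "('b \<Rightarrow> 'k::field) set \<Rightarrow> ('b \<Rightarrow> 'k) set \<Rightarrow> bool" where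
  "subsp W S \<longleftrightarrow> S \<subseteq> W \<and> (\<lambda>_. 0) \<in> S \<and>
     (\<forall>x\<in>S. \<forall>y\<in>S. (\<lambda>b. x b + y b) \<in> S) \<and> (\<forall>c. \<forall>x\<in>S. (\<lambda>b. c * x b) \<in> S)"

definition submod :: "('a \<Rightarrow> 'v) \<Rightarrow> ('a \<Rightarrow> 'v) \<Rightarrow> ('v, 'a, 'b, 'k::field) qrep
    \<Rightarrow> ('v \<Rightarrow> ('b \<Rightarrow> 'k) set) \<Rightarrow> bool" where
  "submod s t R U \<longleftrightarrow> (\<forall>v. subsp (vsp R v) (U v)) \<and>
     (\<forall>a f. f \<in> U (ds s t a) \<longrightarrow> act s t R a f \<in> U (dt s t a))"

definition zero_sub :: "('v, 'a, 'b, 'k::field) qrep \<Rightarrow> 'v \<Rightarrow> ('b \<Rightarrow> 'k) set" where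
  "zero_sub R = (\<lambda>v. {\<lambda>_. 0})"

definition happ :: "('v, 'a, 'c, 'k::field) qrep \<Rightarrow> ('v, 'a, 'b, 'k) qrep
    \<Rightarrow> ('v \<Rightarrow> 'b \<Rightarrow> 'c \<Rightarrow> 'k) \<Rightarrow> 'v \<Rightarrow> ('c \<Rightarrow> 'k) \<Rightarrow> ('b \<Rightarrow> 'k)" where
  "happ N M \<phi> v g = (\<lambda>y. if y \<in> qbas M v then (\<Sum>x\<in>qbas N v. \<phi> v y x * g x) else 0)"

definition is_hom :: "('a \<Rightarrow> 'v) \<Rightarrow> ('a \<Rightarrow> 'v) \<Rightarrow> ('v, 'a, 'c, 'k::field) qrep
    \<Rightarrow> ('v, 'a, 'b, 'k) qrep \<Rightarrow> ('v \<Rightarrow> 'b \<Rightarrow> 'c \<Rightarrow> 'k) \<Rightarrow> bool" where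
  "is_hom s t N M \<phi> \<longleftrightarrow> (\<forall>a g. g \<in> vsp N (ds s t a) \<longrightarrow>
     happ N M \<phi> (dt s t a) (act s t N a g) = act s t M a (happ N M \<phi> (ds s t a) g))"

definition iso_onto :: "('a \<Rightarrow> 'v) \<Rightarrow> ('a \<Rightarrow> 'v) \<Rightarrow> ('v, 'a, 'c, 'k::field) qrep
    \<Rightarrow> ('v, 'a, 'b, 'k) qrep \<Rightarrow> ('v \<Rightarrow> 'b \<Rightarrow> 'c \<Rightarrow> 'k) \<Rightarrow> ('v \<Rightarrow> ('b \<Rightarrow> 'k) set) \<Rightarrow> bool" where
  "iso_onto s t N M \<phi> U \<longleftrightarrow> is_hom s t N M \<phi> \<and>
     (\<forall>v. inj_on (happ N M \<phi> v) (vsp N v) \<and> happ N M \<phi> v ` vsp N v = U v)"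

text \<open>For submodules A \<subseteq> B of M: B/A is isomorphic to N.\<close>
definition subquot_iso :: "('a \<Rightarrow> 'v) \<Rightarrow> ('a \<Rightarrow> 'v) \<Rightarrow> ('v, 'a, 'b, 'k::field) qrep
    \<Rightarrow> ('v \<Rightarrow> ('b \<Rightarrow> 'k) set) \<Rightarrow> ('v \<Rightarrow> ('b \<Rightarrow> 'k) set) \<Rightarrow> ('v, 'a, 'c, 'k) qrep \<Rightarrow> bool" where
  "subquot_iso s t M A B N \<longleftrightarrow> (\<exists>\<phi>.
     (\<forall>v g. g \<in> vsp N v \<longrightarrow> happ N M \<phi> v g \<in> B v) \<and>
     (\<forall>v g. g \<in> vsp N v \<and> happ N M \<phi> v g \<in> A v \<longrightarrow> g = (\<lambda>_. 0)) \<and>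
     (\<forall>v y. y \<in> B v \<longrightarrow> (\<exists>g\<in>vsp N v. (\<lambda>b. y b - happ N M \<phi> v g b) \<in> A v)) \<and>
     (\<forall>a g. g \<in> vsp N (ds s t a) \<longrightarrow>
        (\<lambda>b. act s t M a (happ N M \<phi> (ds s t a) g) b - happ N M \<phi> (dt s t a) (act s t N a g) b)
          \<in> A (dt s t a)))"

text \<open>Standard module Delta(j): the indecomposable projective kQ-module kQ e_j (basis: paths
  of Q starting at j), arrows of Q acting by composition, the alpha^* acting by zero.\<close>
definition Delta :: "('a \<Rightarrow> 'v) \<Rightarrow> ('a \<Rightarrow> 'v) \<Rightarrow> 'v \<Rightarrow> ('v, 'a, 'a list, 'k::field) qrep" where
  "Delta s t j = \<lparr> qbas = (\<lambda>v. {p. qpath s t j p v}),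
     qcoef = (\<lambda>a q p. case a of Inl \<alpha> \<Rightarrow> (if q = p @ [\<alpha>] then 1 else 0) | Inr \<alpha> \<Rightarrow> 0) \<rparr>"

definition Delta_pow :: "('a \<Rightarrow> 'v) \<Rightarrow> ('a \<Rightarrow> 'v) \<Rightarrow> 'v \<Rightarrow> nat
    \<Rightarrow> ('v, 'a, 'a list \<times> nat, 'k::field) qrep" where
  "Delta_pow s t j d = \<lparr> qbas = (\<lambda>v. {(p, l). qpath s t j p v \<and> l < d}),
     qcoef = (\<lambda>a (q, l') (p, l). case a of
                Inl \<alpha> \<Rightarrow> (if q = p @ [\<alpha>] \<and> l' = l then 1 else 0) | Inr \<alpha> \<Rightarrow> 0) \<rparr>"

text \<open>For L = 0 this is a Delta-filtration of M;
  by the correspondence theorem, for general L it is a Delta-filtration of M/L.\<close>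
definition delta_filtration :: "('a \<Rightarrow> 'v) \<Rightarrow> ('a \<Rightarrow> 'v) \<Rightarrow> ('v, 'a, 'b, 'k::field) qrep
    \<Rightarrow> ('v \<Rightarrow> ('b \<Rightarrow> 'k) set) \<Rightarrow> nat \<Rightarrow> (nat \<Rightarrow> 'v \<Rightarrow> ('b \<Rightarrow> 'k) set) \<Rightarrow> (nat \<Rightarrow> 'v) \<Rightarrow> bool" where
  "delta_filtration s t M L r F j \<longleftrightarrow>
     F 0 = L \<and> F r = vsp M \<and> (\<forall>l\<le>r. submod s t M (F l)) \<and>
     (\<forall>l<r. \<forall>v. F l v \<subseteq> F (Suc l) v) \<and>
     (\<forall>l<r. subquot_iso s t M (F l) (F (Suc l)) (Delta s t (j l) :: ('v, 'a, 'a list, 'k) qrep))"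

end

theory Submission
  imports Defs "HOL-Library.Function_Algebras"
begin

text \<open>
  For each step l, the image gen l of the trivial path under the chosen isomorphism
  Delta (j l) -> F (l+1) / F l is a vector of M at the vertex j l.  For the d steps with
  j l = i we send the basis vector (p, k) of Delta(i)^d to the k-th such generator
  transported along the path p.  Because i is a source, the preprojective relations force
  every starred arrow to kill these transports, so this is a homomorphism; it is injective
  by a triangularity argument along the filtration.  Its image Dsub is the submodule of the
  theorem.  Uniqueness: M_i is spanned by the d generators, whereas any submodule
  isomorphic to Delta(i)^d has d independent vectors at i, hence all of M_i; and such a
  submodule is generated by its part at i.  Finally the chain F l + Dsub is a filtration
  of M / Dsub whose steps with j l = i are equalities and whose other steps are still
  Delta (j l); dropping the equalities gives the Delta-filtration of the quotient.
\<close>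

section \<open>Coordinate vectors and their linear algebra\<close>

definition sc :: "'k::field \<Rightarrow> ('b \<Rightarrow> 'k) \<Rightarrow> ('b \<Rightarrow> 'k)" where
  "sc c f = (\<lambda>b. c * f b)"

lemma sc_apply [simp]: "sc c f b = c * f b"
  by (simp add: sc_def)

interpretation fv: vector_space "sc :: 'k::field \<Rightarrow> ('b \<Rightarrow> 'k) \<Rightarrow> ('b \<Rightarrow> 'k)"
  by unfold_locales (auto simp: sc_def fun_eq_iff algebra_simps)

lemma sum_apply: "(sum f A) x = (\<Sum>a\<in>A. f a x)"
  by (induction A rule: infinite_finite_induct) auto

lemma subsp_iff: "subsp W S \<longleftrightarrow> S \<subseteq> W \<and> fv.subspace S"
  by (simp add: subsp_def fv.subspace_def zero_fun_def plus_fun_def sc_def)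

lemma subsp_zero: "subsp W S \<Longrightarrow> 0 \<in> S"
  by (simp add: subsp_iff fv.subspace_0)
lemma subsp_add: "subsp W S \<Longrightarrow> x \<in> S \<Longrightarrow> y \<in> S \<Longrightarrow> x + y \<in> S"
  by (simp add: subsp_iff fv.subspace_add)
lemma subsp_diff: "subsp W S \<Longrightarrow> x \<in> S \<Longrightarrow> y \<in> S \<Longrightarrow> x - y \<in> S"
  by (simp add: subsp_iff fv.subspace_diff)
lemma subsp_sc: "subsp W S \<Longrightarrow> x \<in> S \<Longrightarrow> sc c x \<in> S"
  by (simp add: subsp_iff fv.subspace_scale)
lemma subsp_sum: "subsp W S \<Longrightarrow> (\<And>a. a \<in> A \<Longrightarrow> f a \<in> S) \<Longrightarrow> sum f A \<in> S"
  by (simp add: subsp_iff fv.subspace_sum)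

lemma vsp_zero [simp]: "0 \<in> vsp R v"
  by (simp add: vsp_def)

definition basis_fn :: "'x \<Rightarrow> 'x \<Rightarrow> 'k::field" where
  "basis_fn x = (\<lambda>z. if z = x then 1 else 0)"

lemma basis_fn_vsp: "x \<in> qbas R v \<Longrightarrow> basis_fn x \<in> vsp R v"
  by (auto simp: vsp_def basis_fn_def)

lemma vsp_expand:
  assumes "finite (qbas R v)" "g \<in> vsp R v"
  shows "g = (\<Sum>x\<in>qbas R v. sc (g x) (basis_fn x))"
proof
  fix y
  have "(\<Sum>x\<in>qbas R v. sc (g x) (basis_fn x)) y = (\<Sum>x\<in>qbas R v. if y = x then g x else 0)"
    unfolding sum_apply by (intro sum.cong) (auto simp: basis_fn_def)
  also have "\<dots> = g y"
    using assms by (auto simp: vsp_def)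
  finally show "g y = (\<Sum>x\<in>qbas R v. sc (g x) (basis_fn x)) y" ..
qed

lemma act_add: "act s t R a (f + g) = act s t R a f + act s t R a g"
  by (auto simp: act_def fun_eq_iff algebra_simps sum.distrib)
lemma act_sc: "act s t R a (sc c f) = sc c (act s t R a f)"
  by (auto simp: act_def fun_eq_iff algebra_simps sum_distrib_left)
lemma act_zero [simp]: "act s t R a 0 = 0" "act s t R a (\<lambda>_. 0) = 0"
  by (auto simp: act_def fun_eq_iff)
lemma act_diff: "act s t R a (f - g) = act s t R a f - act s t R a g"
  by (auto simp: act_def fun_eq_iff algebra_simps sum_subtractf)
lemma act_sum: "act s t R a (sum f A) = (\<Sum>x\<in>A. act s t R a (f x))"
  by (induction A rule: infinite_finite_induct) (simp_all add: act_add del: plus_fun_apply)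
lemma act_vsp: "act s t R a f \<in> vsp R (dt s t a)"
  by (simp add: act_def vsp_def)

lemma happ_add: "happ N M \<phi> v (f + g) = happ N M \<phi> v f + happ N M \<phi> v g"
  by (auto simp: happ_def fun_eq_iff algebra_simps sum.distrib)
lemma happ_sc: "happ N M \<phi> v (sc c f) = sc c (happ N M \<phi> v f)"
  by (auto simp: happ_def fun_eq_iff algebra_simps sum_distrib_left)
lemma happ_zero [simp]: "happ N M \<phi> v 0 = 0" "happ N M \<phi> v (\<lambda>_. 0) = 0"
  by (auto simp: happ_def fun_eq_iff)
lemma happ_sum: "happ N M \<phi> v (sum f A) = (\<Sum>x\<in>A. happ N M \<phi> v (f x))"
  by (induction A rule: infinite_finite_induct) (simp_all add: happ_add del: plus_fun_apply)
lemma happ_vsp: "happ N M \<phi> v f \<in> vsp M v"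
  by (simp add: happ_def vsp_def)

lemma happ_expand:
  assumes "finite (qbas N v)" "g \<in> vsp N v"
  shows "happ N M \<phi> v g = (\<Sum>x\<in>qbas N v. sc (g x) (happ N M \<phi> v (basis_fn x)))"
  by (subst vsp_expand[OF assms]) (simp add: happ_sum happ_sc)

lemma is_hom_basis:
  assumes fin: "\<And>v. finite (qbas N v)"
    and basis: "\<And>a x. x \<in> qbas N (ds s t a) \<Longrightarrow>
       happ N M \<phi> (dt s t a) (act s t N a (basis_fn x)) = act s t M a (happ N M \<phi> (ds s t a) (basis_fn x))"
  shows "is_hom s t N M \<phi>"
  unfolding is_hom_def
proof (intro allI impI)
  fix a g assume g: "g \<in> vsp N (ds s t a)"
  note expand = vsp_expand[OF fin g]
  show "happ N M \<phi> (dt s t a) (act s t N a g) = act s t M a (happ N M \<phi> (ds s t a) g)"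
    by (subst (1 2) expand) (simp add: act_sum act_sc happ_sum happ_sc basis)
qed

lemma (in vector_space) independent_spans_smaller_spanning:
  assumes fin: "finite T" and ind: "independent S" and sub: "S \<subseteq> span T"
    and card: "card T \<le> card S"
  shows "T \<subseteq> span S"
proof
  fix x assume xT: "x \<in> T"
  show "x \<in> span S"
  proof (rule ccontr)
    assume nx: "x \<notin> span S"
    have "finite S" using independent_span_bound[OF fin ind sub] by simp
    moreover have "x \<notin> S" using nx span_base by blast
    moreover have "card (insert x S) \<le> card T"
      using independent_span_bound[OF fin independent_insertI[OF nx ind]] sub span_base[OF xT]
      by blast
    ultimately show False using card by simp
  qed
qed

section \<open>Paths\<close>

lemma qpath_append: "qpath s t u (p @ q) w \<longleftrightarrow> (\<exists>v. qpath s t u p v \<and> qpath s t v q w)"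
  by (induction p arbitrary: u) auto

lemma qpath_snoc: "qpath s t u (p @ [a]) w \<longleftrightarrow> qpath s t u p (s a) \<and> t a = w"
  by (auto simp: qpath_append)

lemma qpath_to_source:
  assumes "\<forall>a. t a \<noteq> i" shows "qpath s t u p i \<longleftrightarrow> p = [] \<and> u = i"
proof
  show "qpath s t u p i \<Longrightarrow> p = [] \<and> u = i"
  proof (induction p arbitrary: u)
    case (Cons a ps)
    then show ?case using assms by (cases ps) auto
  qed simp
qed simp

lemma finite_paths:
  fixes s t :: "'a::finite \<Rightarrow> 'v::finite"
  assumes "acyclic {(s a, t a) | a. True}"
  shows "finite {p. qpath s t u p v}"
proof -
  let ?R = "{(s a, t a) | a. True}"
  have "finite ?R" by (rule finite_subset[of _ UNIV]) auto
  hence wf: "wf (?R\<inverse>)" using assms finite_acyclic_wf_converse by blast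
  have "finite {p. \<exists>w. qpath s t u p w}"
  proof (induction u rule: wf_induct[OF wf])
    case (1 u)
    have "{p. \<exists>w. qpath s t u p w} \<subseteq>
       insert [] (\<Union>a\<in>{a. s a = u}. (#) a ` {p. \<exists>w. qpath s t (t a) p w})"
    proof
      fix p assume "p \<in> {p. \<exists>w. qpath s t u p w}"
      thus "p \<in> insert [] (\<Union>a\<in>{a. s a = u}. (#) a ` {p. \<exists>w. qpath s t (t a) p w})"
        by (cases p) fastforce+
    qed
    moreover have "finite (\<Union>a\<in>{a. s a = u}. (#) a ` {p. \<exists>w. qpath s t (t a) p w})"
      using 1 by auto
    ultimately show ?case using finite_subset by blast
  qed
  thus ?thesis by (rule finite_subset[rotated]) auto
qed

section \<open>The standard modules\<close>

lemma qbas_Delta [simp]: "qbas (Delta s t j) v = {p. qpath s t j p v}"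
  by (simp add: Delta_def)

lemma qbas_Delta_pow [simp]: "qbas (Delta_pow s t j d) v = {p. qpath s t j p v} \<times> {..<d}"
  by (auto simp: Delta_pow_def)

lemma act_Delta_basis:
  assumes fin: "finite {p. qpath s t j p (s \<alpha>)}" and p: "qpath s t j p (s \<alpha>)"
  shows "act s t (Delta s t j) (Inl \<alpha>) (basis_fn p) = basis_fn (p @ [\<alpha>])"
proof
  fix y
  have "(\<Sum>x\<in>{p. qpath s t j p (s \<alpha>)}. (if y = x @ [\<alpha>] then 1 else 0) * basis_fn p x)
      = (\<Sum>x\<in>{p. qpath s t j p (s \<alpha>)}. if x = p then (if y = p @ [\<alpha>] then 1 else 0) else 0)"
    by (intro sum.cong) (auto simp: basis_fn_def)
  also have "\<dots> = (if y = p @ [\<alpha>] then 1 else 0)"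
    using fin p by simp
  finally show "act s t (Delta s t j) (Inl \<alpha>) (basis_fn p) y = basis_fn (p @ [\<alpha>]) y"
    using p by (auto simp: act_def Delta_def basis_fn_def qpath_snoc)
qed

lemma act_Delta_pow_basis:
  assumes fin: "finite {p. qpath s t j p (s \<alpha>)}" and p: "qpath s t j p (s \<alpha>)" and k: "k < d"
  shows "act s t (Delta_pow s t j d) (Inl \<alpha>) (basis_fn (p, k)) = basis_fn (p @ [\<alpha>], k)"
proof
  fix y :: "'a list \<times> nat"
  obtain q l where y: "y = (q, l)" by fastforce
  have "(\<Sum>x\<in>{p. qpath s t j p (s \<alpha>)} \<times> {..<d}.
          (if q = fst x @ [\<alpha>] \<and> l = snd x then 1 else 0) * basis_fn (p, k) x)
      = (\<Sum>x\<in>{p. qpath s t j p (s \<alpha>)} \<times> {..<d}.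
          if x = (p, k) then (if (q, l) = (p @ [\<alpha>], k) then 1 else 0) else 0)"
    by (intro sum.cong) (auto simp: basis_fn_def)
  also have "\<dots> = (if (q, l) = (p @ [\<alpha>], k) then 1 else 0)"
    using fin p k by simp
  finally show "act s t (Delta_pow s t j d) (Inl \<alpha>) (basis_fn (p, k)) y = basis_fn (p @ [\<alpha>], k) y"
    using p k by (auto simp: y act_def Delta_pow_def basis_fn_def qpath_snoc case_prod_beta lessThan_def)
qed

lemma act_Delta_pow_Inr: "act s t (Delta_pow s t j d) (Inr \<alpha>) g = 0"
  by (simp add: act_def Delta_pow_def fun_eq_iff case_prod_beta)

section \<open>Transport along paths\<close>

definition path_act :: "('a \<Rightarrow> 'v) \<Rightarrow> ('a \<Rightarrow> 'v) \<Rightarrow> ('v, 'a, 'b, 'k::field) qrep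
    \<Rightarrow> ('b \<Rightarrow> 'k) \<Rightarrow> 'a list \<Rightarrow> ('b \<Rightarrow> 'k)" where
  "path_act s t R e p = fold (\<lambda>a f. act s t R (Inl a) f) p e"

lemma path_act_Nil [simp]: "path_act s t R e [] = e"
  by (simp add: path_act_def)

lemma path_act_snoc [simp]: "path_act s t R e (p @ [a]) = act s t R (Inl a) (path_act s t R e p)"
  by (simp add: path_act_def)

lemma submod_subsp: "submod s t R U \<Longrightarrow> subsp (vsp R v) (U v)"
  by (simp add: submod_def)

lemma submod_act: "submod s t R U \<Longrightarrow> f \<in> U (ds s t a) \<Longrightarrow> act s t R a f \<in> U (dt s t a)"
  by (simp add: submod_def)

lemma submod_vsp: "submod s t R (vsp R)"
proof -
  have "subsp (vsp R v) (vsp R v)" for v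
    by (auto simp: subsp_def vsp_def)
  then show ?thesis by (simp add: submod_def act_vsp)
qed

lemma path_act_submod:
  assumes "submod s t R U" "e \<in> U u" "qpath s t u p v"
  shows "path_act s t R e p \<in> U v"
  using assms(3)
proof (induction p arbitrary: v rule: rev_induct)
  case (snoc a p)
  hence "qpath s t u p (s a)" "t a = v" by (auto simp: qpath_snoc)
  with snoc.IH submod_act[OF assms(1), of _ "Inl a"] show ?case by auto
qed (use assms(2) in simp)

lemma path_act_vsp: "e \<in> vsp R u \<Longrightarrow> qpath s t u p v \<Longrightarrow> path_act s t R e p \<in> vsp R v"
  by (rule path_act_submod[OF submod_vsp])

text \<open>Induction on the path: for the last arrow
  alpha, the relation alpha* alpha = sum gamma gamma* reduces to the shorter path, and the
  relations beta* alpha = 0 handle the other arrows.\<close>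
lemma star_kills_source_paths:
  assumes Dm: "D_module s t M" and src: "\<forall>a. t a \<noteq> i"
    and e: "e \<in> vsp M i" and p: "qpath s t i p v" and \<gamma>: "t \<gamma> = v"
  shows "act s t M (Inr \<gamma>) (path_act s t M e p) = 0"
  using p \<gamma>
proof (induction p arbitrary: v \<gamma> rule: rev_induct)
  case Nil
  then show ?case using src by auto
next
  case (snoc \<alpha> p)
  hence p: "qpath s t i p (s \<alpha>)" and tv: "t \<alpha> = v" by (auto simp: qpath_snoc)
  have pv: "path_act s t M e p \<in> vsp M (s \<alpha>)" using path_act_vsp[OF e p] .
  show ?case
  proof (cases "\<gamma> = \<alpha>")
    case True
    have "act s t M (Inr \<alpha>) (act s t M (Inl \<alpha>) (path_act s t M e p))
        = (\<lambda>y. \<Sum>\<delta>\<in>{\<delta>. t \<delta> = s \<alpha>}. act s t M (Inl \<delta>) (act s t M (Inr \<delta>) (path_act s t M e p)) y)"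
      using Dm pv unfolding D_module_def by blast
    also have "\<dots> = (\<lambda>y. \<Sum>\<delta>\<in>{\<delta>. t \<delta> = s \<alpha>}. 0)"
      by (intro ext sum.cong refl) (simp add: snoc.IH[OF p])
    also have "\<dots> = 0"
      by (simp add: zero_fun_def)
    finally show ?thesis using True by simp
  next
    case False
    have "act s t M (Inr \<gamma>) (act s t M (Inl \<alpha>) (path_act s t M e p)) = (\<lambda>_. 0)"
      using Dm pv False snoc.prems tv unfolding D_module_def by metis
    then show ?thesis by (simp add: zero_fun_def)
  qed
qed

section \<open>Submodules and filtrations\<close>

lemma submod_plus:
  assumes A: "submod s t R A" and B: "submod s t R B"
  shows "submod s t R (\<lambda>v. {x + u | x u. x \<in> A v \<and> u \<in> B v})"
  unfolding submod_def
proof (intro conjI allI impI)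
  fix v
  have "A v \<subseteq> vsp R v" "fv.subspace (A v)" "B v \<subseteq> vsp R v" "fv.subspace (B v)"
    using submod_subsp[OF A, of v] submod_subsp[OF B, of v] by (simp_all add: subsp_iff)
  moreover have "x + u \<in> vsp R v" if "x \<in> vsp R v" "u \<in> vsp R v" for x u
    using that by (simp add: vsp_def)
  ultimately have "{x + u | x u. x \<in> A v \<and> u \<in> B v} \<subseteq> vsp R v"
    by blast
  then show "subsp (vsp R v) {x + u | x u. x \<in> A v \<and> u \<in> B v}"
    unfolding subsp_iff using fv.subspace_sums \<open>fv.subspace (A v)\<close> \<open>fv.subspace (B v)\<close>
    by simp
next
  fix a f assume "f \<in> {x + u | x u. x \<in> A (ds s t a) \<and> u \<in> B (ds s t a)}"
  then obtain x u where xu: "f = x + u" "x \<in> A (ds s t a)" "u \<in> B (ds s t a)" by blast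
  have "act s t R a f = act s t R a x + act s t R a u" using xu by (simp add: act_add)
  then show "act s t R a f \<in> {x + u | x u. x \<in> A (dt s t a) \<and> u \<in> B (dt s t a)}"
    using submod_act[OF A xu(2)] submod_act[OF B xu(3)] by blast
qed

text \<open>The conditions on the witness phi in subquot_iso, with differences written using the
  subtraction of the function space.\<close>
definition subquot_map :: "('a \<Rightarrow> 'v) \<Rightarrow> ('a \<Rightarrow> 'v) \<Rightarrow> ('v, 'a, 'b, 'k::field) qrep
    \<Rightarrow> ('v \<Rightarrow> ('b \<Rightarrow> 'k) set) \<Rightarrow> ('v \<Rightarrow> ('b \<Rightarrow> 'k) set) \<Rightarrow> ('v, 'a, 'c, 'k) qrep
    \<Rightarrow> ('v \<Rightarrow> 'b \<Rightarrow> 'c \<Rightarrow> 'k) \<Rightarrow> bool" where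
  "subquot_map s t M A B N \<phi> \<longleftrightarrow>
     (\<forall>v g. g \<in> vsp N v \<longrightarrow> happ N M \<phi> v g \<in> B v) \<and>
     (\<forall>v g. g \<in> vsp N v \<and> happ N M \<phi> v g \<in> A v \<longrightarrow> g = 0) \<and>
     (\<forall>v y. y \<in> B v \<longrightarrow> (\<exists>g\<in>vsp N v. y - happ N M \<phi> v g \<in> A v)) \<and>
     (\<forall>a g. g \<in> vsp N (ds s t a) \<longrightarrow>
        act s t M a (happ N M \<phi> (ds s t a) g) - happ N M \<phi> (dt s t a) (act s t N a g)
          \<in> A (dt s t a))"

lemma subquot_iso_iff: "subquot_iso s t M A B N \<longleftrightarrow> (\<exists>\<phi>. subquot_map s t M A B N \<phi>)"
  by (simp add: subquot_iso_def subquot_map_def fun_diff_def zero_fun_def)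

definition delta_chain :: "('a \<Rightarrow> 'v) \<Rightarrow> ('a \<Rightarrow> 'v) \<Rightarrow> ('v, 'a, 'b, 'k::field) qrep
    \<Rightarrow> nat \<Rightarrow> (nat \<Rightarrow> 'v \<Rightarrow> ('b \<Rightarrow> 'k) set) \<Rightarrow> (nat \<Rightarrow> 'v) \<Rightarrow> bool" where
  "delta_chain s t M r F j \<longleftrightarrow> (\<forall>l\<le>r. submod s t M (F l)) \<and>
     (\<forall>l<r. \<forall>v. F l v \<subseteq> F (Suc l) v) \<and>
     (\<forall>l<r. subquot_iso s t M (F l) (F (Suc l)) (Delta s t (j l) :: ('v, 'a, 'a list, 'k) qrep))"

lemma delta_filtration_iff:
  "delta_filtration s t M L r F j \<longleftrightarrow> F 0 = L \<and> F r = vsp M \<and> delta_chain s t M r F j"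
  by (auto simp: delta_filtration_def delta_chain_def)

lemma delta_chain_drop_repeats:
  fixes G :: "nat \<Rightarrow> 'v \<Rightarrow> ('b \<Rightarrow> 'k::field) set"
  assumes "\<forall>l\<le>n. submod s t M (G l)"
    and "\<forall>l<n. \<forall>v. G l v \<subseteq> G (Suc l) v"
    and "\<forall>l<n. G l = G (Suc l) \<or>
           subquot_iso s t M (G l) (G (Suc l)) (Delta s t (J l) :: ('v, 'a, 'a list, 'k) qrep)"
  shows "\<exists>r F j. F 0 = G 0 \<and> F r = G n \<and> delta_chain s t M r F j"
  using assms
proof (induction n)
  case 0
  show ?case by (rule exI[of _ 0], rule exI[of _ "\<lambda>_. G 0"]) (use 0 in \<open>auto simp: delta_chain_def\<close>)
next
  case (Suc n)
  have "\<exists>r F j. F 0 = G 0 \<and> F r = G n \<and> delta_chain s t M r F j"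
    by (rule Suc.IH) (use Suc.prems in simp_all)
  then obtain r F j where IH: "F 0 = G 0" "F r = G n" "delta_chain s t M r F j"
    by blast
  show ?case
  proof (cases "G n = G (Suc n)")
    case True
    then show ?thesis using IH by (intro exI[of _ r] exI[of _ F] exI[of _ j]) simp
  next
    case False
    then have sq: "subquot_iso s t M (G n) (G (Suc n))
        (Delta s t (J n) :: ('v, 'a, 'a list, 'k) qrep)"
      using Suc.prems(3)[rule_format, OF lessI] by simp
    define F' where "F' = F(Suc r := G (Suc n))"
    define j' where "j' = j(r := J n)"
    have F': "F' l = F l" if "l \<le> r" for l using that by (simp add: F'_def)
    have "delta_chain s t M (Suc r) F' j'"
      unfolding delta_chain_def
    proof (intro conjI allI impI)
      fix l
      show "submod s t M (F' l)" if "l \<le> Suc r"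
        using that IH(3) F' Suc.prems(1)
        by (cases "l = Suc r") (auto simp: F'_def delta_chain_def)
      show "F' l v \<subseteq> F' (Suc l) v" if "l < Suc r" for v
        using that IH(2,3) F' Suc.prems(2)
        by (cases "l = r") (auto simp: F'_def delta_chain_def)
      show "subquot_iso s t M (F' l) (F' (Suc l)) (Delta s t (j' l))" if "l < Suc r"
        using that IH(2,3) F' sq
        by (cases "l = r") (auto simp: F'_def j'_def delta_chain_def)
    qed
    moreover have "F' 0 = G 0" "F' (Suc r) = G (Suc n)"
      using F'[of 0] IH(1) by (simp_all add: F'_def)
    ultimately show ?thesis by blast
  qed
qed

section \<open>Submodules isomorphic to a power of a standard module\<close>

lemma hom_image_submod:
  assumes hom: "is_hom s t N M \<phi>"
  shows "submod s t M (\<lambda>v. happ N M \<phi> v ` vsp N v)"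
  unfolding submod_def
proof (intro conjI allI impI)
  fix v
  have "fv.subspace (happ N M \<phi> v ` vsp N v)"
    unfolding fv.subspace_def
  proof (intro conjI ballI allI)
    show "0 \<in> happ N M \<phi> v ` vsp N v"
      using happ_zero vsp_zero by (metis image_eqI)
  next
    fix x y assume "x \<in> happ N M \<phi> v ` vsp N v" "y \<in> happ N M \<phi> v ` vsp N v"
    then obtain g h where "g \<in> vsp N v" "h \<in> vsp N v" "x = happ N M \<phi> v g" "y = happ N M \<phi> v h"
      by blast
    moreover have "g + h \<in> vsp N v" using calculation by (simp add: vsp_def)
    ultimately show "x + y \<in> happ N M \<phi> v ` vsp N v"
      by (metis happ_add image_eqI)
  next
    fix c x assume "x \<in> happ N M \<phi> v ` vsp N v"
    then obtain g where "g \<in> vsp N v" "x = happ N M \<phi> v g" by blast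
    moreover have "sc c g \<in> vsp N v" using calculation by (simp add: vsp_def)
    ultimately show "sc c x \<in> happ N M \<phi> v ` vsp N v"
      by (metis happ_sc image_eqI)
  qed
  then show "subsp (vsp M v) (happ N M \<phi> v ` vsp N v)"
    by (auto simp: subsp_iff happ_vsp)
next
  fix a f assume "f \<in> happ N M \<phi> (ds s t a) ` vsp N (ds s t a)"
  then obtain g where g: "g \<in> vsp N (ds s t a)" "f = happ N M \<phi> (ds s t a) g" by blast
  then have "act s t M a f = happ N M \<phi> (dt s t a) (act s t N a g)"
    using hom unfolding is_hom_def by simp
  then show "act s t M a f \<in> happ N M \<phi> (dt s t a) ` vsp N (dt s t a)"
    using act_vsp by blast
qed

lemma hom_Delta_pow_basis:
  fixes M :: "('v, 'a, 'b, 'k::field) qrep"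
  assumes fin: "\<And>u. finite {p. qpath s t i p u}" and hom: "is_hom s t (Delta_pow s t i d) M \<psi>"
    and p: "qpath s t i p v" and k: "k < d"
  shows "happ (Delta_pow s t i d) M \<psi> v (basis_fn (p, k))
       = path_act s t M (happ (Delta_pow s t i d) M \<psi> i (basis_fn ([], k))) p"
  using p
proof (induction p arbitrary: v rule: rev_induct)
  case (snoc \<alpha> p)
  hence p: "qpath s t i p (s \<alpha>)" and tv: "t \<alpha> = v" by (auto simp: qpath_snoc)
  have "basis_fn (p, k) \<in> vsp (Delta_pow s t i d) (ds s t (Inl \<alpha>))"
    using p k by (intro basis_fn_vsp) simp
  then have commute: "happ (Delta_pow s t i d) M \<psi> (t \<alpha>) (act s t (Delta_pow s t i d) (Inl \<alpha>) (basis_fn (p, k)))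
      = act s t M (Inl \<alpha>) (happ (Delta_pow s t i d) M \<psi> (s \<alpha>) (basis_fn (p, k)))"
    using hom unfolding is_hom_def by fastforce
  have "happ (Delta_pow s t i d) M \<psi> v (basis_fn (p @ [\<alpha>], k))
      = happ (Delta_pow s t i d) M \<psi> (t \<alpha>) (act s t (Delta_pow s t i d) (Inl \<alpha>) (basis_fn (p, k)))"
    by (simp add: act_Delta_pow_basis[OF fin p k] tv)
  also have "\<dots> = act s t M (Inl \<alpha>) (happ (Delta_pow s t i d) M \<psi> (s \<alpha>) (basis_fn (p, k)))"
    by (rule commute)
  finally show ?case using snoc.IH[OF p] by simp
qed simp

lemma iso_Delta_pow_generated:
  assumes fin: "\<And>u. finite {p. qpath s t i p u}"
    and iso: "iso_onto s t (Delta_pow s t i d) M \<psi> U" and V: "submod s t M V"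
    and sub: "U i \<subseteq> V i"
  shows "U v \<subseteq> V v"
proof
  let ?N = "Delta_pow s t i d" and ?H = "happ (Delta_pow s t i d) M \<psi>"
  have hom: "is_hom s t ?N M \<psi>" and img: "\<And>v. ?H v ` vsp ?N v = U v"
    using iso unfolding iso_onto_def by auto
  fix y assume "y \<in> U v"
  then obtain g where g: "g \<in> vsp ?N v" and y: "y = ?H v g" using img[of v] by blast
  have "?H v (basis_fn x) \<in> V v" if x: "x \<in> qbas ?N v" for x
  proof -
    obtain p k where pk: "x = (p, k)" "qpath s t i p v" "k < d" using x by auto
    have "?H i (basis_fn ([], k)) \<in> V i"
      using sub img[of i] pk(3) basis_fn_vsp[of "([], k)" ?N i] by auto
    then show ?thesis
      using hom_Delta_pow_basis[OF fin hom pk(2,3)] path_act_submod[OF V _ pk(2)] pk(1) by simp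
  qed
  moreover have finN: "finite (qbas ?N v)" using fin by simp
  ultimately show "y \<in> V v"
    unfolding y happ_expand[OF finN g]
    by (intro subsp_sum[OF submod_subsp[OF V]] subsp_sc[OF submod_subsp[OF V]]) auto
qed

lemma iso_Delta_pow_top_independent:
  fixes M :: "('v, 'a, 'b, 'k::field) qrep"
  assumes src: "\<forall>a. t a \<noteq> i" and iso: "iso_onto s t (Delta_pow s t i d) M \<psi> U"
  shows "\<exists>S. S \<subseteq> U i \<and> fv.independent S \<and> card S = d"
proof -
  let ?N = "Delta_pow s t i d" and ?H = "happ (Delta_pow s t i d) M \<psi> i"
  have inj: "inj_on ?H (vsp ?N i)" and img: "?H ` vsp ?N i = U i"
    using iso unfolding iso_onto_def by auto
  have qbi: "qbas ?N i = (\<lambda>k. ([], k)) ` {..<d}"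
    using qpath_to_source[OF src] by auto
  define b where "b k = ?H (basis_fn ([], k))" for k
  have top: "basis_fn ([], k) \<in> vsp ?N i" if "k < d" for k
    using that qbi by (intro basis_fn_vsp) auto
  have binj: "inj_on b {..<d}"
  proof (rule inj_onI)
    fix k k' assume kk: "k \<in> {..<d}" "k' \<in> {..<d}" "b k = b k'"
    then have "(basis_fn ([], k) :: 'a list \<times> nat \<Rightarrow> 'k) = basis_fn ([], k')"
      using inj_onD[OF inj _ top[of k] top[of k']] unfolding b_def by simp
    then show "k = k'" by (auto simp: basis_fn_def fun_eq_iff split: if_splits)
  qed
  have indep: "fv.independent (b ` {..<d})"
  proof (rule fv.independent_if_scalars_zero)
    fix f x assume sum0: "(\<Sum>x\<in>b ` {..<d}. sc (f x) x) = 0" and x: "x \<in> b ` {..<d}"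
    define g :: "'a list \<times> nat \<Rightarrow> 'k" where "g = (\<lambda>(p, k). if p = [] \<and> k < d then f (b k) else 0)"
    have gv: "g \<in> vsp ?N i" unfolding vsp_def qbi by (auto simp: g_def)
    have finN: "finite (qbas ?N i)" unfolding qbi by simp
    have "?H g = (\<Sum>k<d. sc (g ([], k)) (b k))"
      unfolding happ_expand[OF finN gv] qbi b_def by (subst sum.reindex) (auto simp: inj_on_def)
    also have "\<dots> = (\<Sum>x\<in>b ` {..<d}. sc (f x) x)"
      by (simp add: sum.reindex[OF binj] g_def)
    finally have "g = 0" using sum0 inj_onD[OF inj _ gv vsp_zero] by simp
    obtain k where k: "k < d" "x = b k" using x by auto
    with \<open>g = 0\<close> have "g ([], k) = 0" by simp
    then show "f x = 0" using k by (simp add: g_def)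
  qed simp
  show ?thesis
    using indep card_image[OF binj] img top by (intro exI[of _ "b ` {..<d}"]) (auto simp: b_def)
qed

section \<open>A Delta-filtered module with a source vertex\<close>

locale source_filtration =
  fixes s t :: "'a::finite \<Rightarrow> 'v::finite"
    and M :: "('v, 'a, 'b, 'k::field) qrep"
    and i :: 'v and r :: nat and F :: "nat \<Rightarrow> 'v \<Rightarrow> ('b \<Rightarrow> 'k) set" and j :: "nat \<Rightarrow> 'v"
    and d :: nat
  assumes acyc: "acyclic {(s a, t a) | a. True}"
    and Dm: "D_module s t M"
    and src: "\<forall>a. t a \<noteq> i"
    and filt: "delta_filtration s t M (zero_sub M) r F j"
    and d_card: "d = card {l. l < r \<and> j l = i}"
begin

abbreviation P :: "'v \<Rightarrow> 'v \<Rightarrow> 'a list set" where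
  "P u v \<equiv> {p. qpath s t u p v}"
abbreviation pa :: "('b \<Rightarrow> 'k) \<Rightarrow> 'a list \<Rightarrow> 'b \<Rightarrow> 'k" where
  "pa \<equiv> path_act s t M"
abbreviation Di :: "('v, 'a, 'a list \<times> nat, 'k) qrep" where
  "Di \<equiv> Delta_pow s t i d"

lemma finP: "finite (P u v)"
  using finite_paths[OF acyc] .

lemma F_submod: "l \<le> r \<Longrightarrow> submod s t M (F l)"
  using filt by (simp add: delta_filtration_def)
lemma F_subsp: "l \<le> r \<Longrightarrow> subsp (vsp M v) (F l v)"
  by (rule submod_subsp[OF F_submod])
lemma F0: "F 0 v = {0}"
  using filt by (simp add: delta_filtration_def zero_sub_def zero_fun_def)
lemma Fr: "F r = vsp M"
  using filt by (simp add: delta_filtration_def)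
lemma F_mono: "a \<le> b \<Longrightarrow> b \<le> r \<Longrightarrow> F a v \<subseteq> F b v"
proof (induction b rule: dec_induct)
  case (step n)
  then have "F n v \<subseteq> F (Suc n) v" using filt by (simp add: delta_filtration_def)
  then show ?case using step by simp
qed simp

definition qmap :: "nat \<Rightarrow> 'v \<Rightarrow> 'b \<Rightarrow> 'a list \<Rightarrow> 'k" where
  "qmap l = (SOME \<phi>. subquot_map s t M (F l) (F (Suc l)) (Delta s t (j l)) \<phi>)"

abbreviation lift :: "nat \<Rightarrow> 'v \<Rightarrow> ('a list \<Rightarrow> 'k) \<Rightarrow> 'b \<Rightarrow> 'k" where
  "lift l \<equiv> happ (Delta s t (j l)) M (qmap l)"

lemma qmap:
  assumes l: "l < r"
  shows "subquot_map s t M (F l) (F (Suc l)) (Delta s t (j l)) (qmap l)"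
proof -
  have "subquot_iso s t M (F l) (F (Suc l)) (Delta s t (j l))"
    using filt l by (simp add: delta_filtration_def)
  then have "\<exists>\<phi>. subquot_map s t M (F l) (F (Suc l)) (Delta s t (j l)) \<phi>"
    by (simp add: subquot_iso_iff)
  then show ?thesis unfolding qmap_def by (rule someI_ex)
qed

lemma lift_in: "l < r \<Longrightarrow> g \<in> vsp (Delta s t (j l)) v \<Longrightarrow> lift l v g \<in> F (Suc l) v"
  using qmap unfolding subquot_map_def by blast
lemma lift_inj: "l < r \<Longrightarrow> g \<in> vsp (Delta s t (j l)) v \<Longrightarrow> lift l v g \<in> F l v \<Longrightarrow> g = 0"
  using qmap unfolding subquot_map_def by blast
lemma lift_onto: "l < r \<Longrightarrow> y \<in> F (Suc l) v \<Longrightarrow> \<exists>g\<in>vsp (Delta s t (j l)) v. y - lift l v g \<in> F l v"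
  using qmap unfolding subquot_map_def by blast
lemma lift_hom: "l < r \<Longrightarrow> g \<in> vsp (Delta s t (j l)) (ds s t a) \<Longrightarrow>
    act s t M a (lift l (ds s t a) g) - lift l (dt s t a) (act s t (Delta s t (j l)) a g) \<in> F l (dt s t a)"
  using qmap unfolding subquot_map_def by blast

definition pos :: "nat \<Rightarrow> nat" where
  "pos = (SOME h. bij_betw h {..<d} {l. l < r \<and> j l = i})"

lemma pos_bij: "bij_betw pos {..<d} {l. l < r \<and> j l = i}"
proof -
  have "\<exists>h. bij_betw h {..<d} {l. l < r \<and> j l = i}"
    using ex_bij_betw_nat_finite[of "{l. l < r \<and> j l = i}"] d_card by (simp add: atLeast0LessThan)
  then show ?thesis unfolding pos_def by (rule someI_ex)
qed

lemma pos_lt: "k < d \<Longrightarrow> pos k < r"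
  using pos_bij by (auto simp: bij_betw_def)
lemma pos_j: "k < d \<Longrightarrow> j (pos k) = i"
  using pos_bij by (auto simp: bij_betw_def)
lemma pos_inj: "k < d \<Longrightarrow> k' < d \<Longrightarrow> pos k = pos k' \<Longrightarrow> k = k'"
  using pos_bij by (auto simp: bij_betw_def inj_on_def)
lemma pos_surj:
  assumes "l < r" "j l = i" shows "\<exists>k<d. pos k = l"
proof -
  have "l \<in> pos ` {..<d}" using pos_bij assms by (simp add: bij_betw_def)
  then show ?thesis by auto
qed

definition gen :: "nat \<Rightarrow> 'b \<Rightarrow> 'k" where
  "gen l = lift l (j l) (basis_fn [])"

lemma gen_F: "l < r \<Longrightarrow> gen l \<in> F (Suc l) (j l)"
  unfolding gen_def by (rule lift_in) (auto intro: basis_fn_vsp)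

lemma gen_vsp: "gen l \<in> vsp M (j l)"
  unfolding gen_def by (rule happ_vsp)

lemma gen_pos_vsp: "k < d \<Longrightarrow> gen (pos k) \<in> vsp M i"
  using gen_vsp[of "pos k"] pos_j by simp

lemma lift_basis_mod:
  assumes l: "l < r" and p: "qpath s t (j l) p v"
  shows "lift l v (basis_fn p) - pa (gen l) p \<in> F l v"
  using p
proof (induction p arbitrary: v rule: rev_induct)
  case Nil
  then show ?case using subsp_zero[OF F_subsp[of l "j l"]] l by (simp add: gen_def zero_fun_def)
next
  case (snoc \<alpha> p)
  hence p: "qpath s t (j l) p (s \<alpha>)" and tv: "t \<alpha> = v" by (auto simp: qpath_snoc)
  let ?x = "lift l (s \<alpha>) (basis_fn p)"
  have Fl: "subsp (vsp M w) (F l w)" for w using F_subsp l by simp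
  have "act s t M (Inl \<alpha>) (?x - pa (gen l) p) \<in> F l (t \<alpha>)"
    using submod_act[OF F_submod, of l "?x - pa (gen l) p" "Inl \<alpha>"] snoc.IH[OF p] l by simp
  then have A: "act s t M (Inl \<alpha>) ?x - pa (gen l) (p @ [\<alpha>]) \<in> F l (t \<alpha>)"
    by (simp add: act_diff)
  have B: "act s t M (Inl \<alpha>) ?x - lift l (t \<alpha>) (basis_fn (p @ [\<alpha>])) \<in> F l (t \<alpha>)"
    using lift_hom[OF l, of "basis_fn p" "Inl \<alpha>"] p
    by (simp add: basis_fn_vsp act_Delta_basis[OF finP p])
  have "(act s t M (Inl \<alpha>) ?x - pa (gen l) (p @ [\<alpha>]))
      - (act s t M (Inl \<alpha>) ?x - lift l (t \<alpha>) (basis_fn (p @ [\<alpha>]))) \<in> F l (t \<alpha>)"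
    by (rule subsp_diff[OF Fl A B])
  moreover have "(x - y) - (x - z) = z - (y :: 'b \<Rightarrow> 'k)" for x y z
    by simp
  ultimately show ?case unfolding tv[symmetric] by (simp only:)
qed

lemma lift_mod:
  assumes l: "l < r" and g: "g \<in> vsp (Delta s t (j l)) v"
  shows "lift l v g - (\<Sum>p\<in>P (j l) v. sc (g p) (pa (gen l) p)) \<in> F l v"
proof -
  have "lift l v g - (\<Sum>p\<in>P (j l) v. sc (g p) (pa (gen l) p))
      = (\<Sum>p\<in>P (j l) v. sc (g p) (lift l v (basis_fn p) - pa (gen l) p))"
    using happ_expand[of "Delta s t (j l)" v g M "qmap l"] finP g
    by (simp add: fv.scale_right_diff_distrib sum_subtractf)
  also have "\<dots> \<in> F l v"
    using lift_basis_mod[OF l] F_subsp[of l v] l by (intro subsp_sum subsp_sc) auto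
  finally show ?thesis .
qed

lemma P_to_source: "P u i = (if u = i then {[]} else {})"
  using qpath_to_source[OF src] by auto

definition emb :: "'v \<Rightarrow> ('a list \<times> nat \<Rightarrow> 'k) \<Rightarrow> 'b \<Rightarrow> 'k" where
  "emb v c = (\<Sum>k<d. \<Sum>p\<in>P i v. sc (c (p, k)) (pa (gen (pos k)) p))"

lemma emb_zero:
  assumes "\<And>p k. qpath s t i p v \<Longrightarrow> k < d \<Longrightarrow> c (p, k) = 0"
  shows "emb v c = 0"
  unfolding emb_def using assms by (intro sum.neutral ballI) (auto simp: fun_eq_iff)

lemma emb_0 [simp]: "emb v 0 = 0"
  by (rule emb_zero) simp

lemma emb_add: "emb v (\<lambda>x. c1 x + c2 x) = emb v c1 + emb v c2"
  unfolding emb_def by (simp add: fv.scale_left_distrib sum.distrib)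

lemma emb_diff: "emb v (\<lambda>x. c1 x - c2 x) = emb v c1 - emb v c2"
  unfolding emb_def by (simp add: fv.scale_left_diff_distrib sum_subtractf)

lemma emb_single:
  assumes "k0 < d"
  shows "emb v (\<lambda>(p, k). if k = k0 then c p else 0) = (\<Sum>p\<in>P i v. sc (c p) (pa (gen (pos k0)) p))"
proof -
  have "emb v (\<lambda>(p, k). if k = k0 then c p else 0)
      = (\<Sum>k<d. if k = k0 then (\<Sum>p\<in>P i v. sc (c p) (pa (gen (pos k0)) p)) else 0)"
    unfolding emb_def by (intro sum.cong refl) (auto simp: fun_eq_iff)
  also have "\<dots> = (\<Sum>p\<in>P i v. sc (c p) (pa (gen (pos k0)) p))"
    using assms by (simp add: sum.delta)
  finally show ?thesis .
qed

lemma emb_basis: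
  assumes p: "qpath s t i p v" and k: "k < d"
  shows "emb v (basis_fn (p, k)) = pa (gen (pos k)) p"
proof -
  have "emb v (basis_fn (p, k)) = emb v (\<lambda>(q, l). if l = k then (if q = p then 1 else 0) else 0)"
    by (rule arg_cong[where f = "emb v"]) (auto simp: basis_fn_def fun_eq_iff)
  also have "\<dots> = (\<Sum>q\<in>P i v. if q = p then pa (gen (pos k)) p else 0)"
    unfolding emb_single[OF k] by (intro sum.cong refl) (auto simp: fun_eq_iff)
  also have "\<dots> = pa (gen (pos k)) p"
    using finP p by simp
  finally show ?thesis .
qed

lemma pa_gen_F:
  assumes k: "k < d" and p: "qpath s t i p v" and m: "Suc (pos k) \<le> m" "m \<le> r"
  shows "pa (gen (pos k)) p \<in> F m v"
proof -
  have "pa (gen (pos k)) p \<in> F (Suc (pos k)) v"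
    using path_act_submod[OF F_submod gen_F] pos_lt[OF k] pos_j[OF k] p by simp
  then show ?thesis using F_mono[OF m] by blast
qed

lemma emb_in_F:
  assumes m: "m \<le> r" and c: "\<And>p k. qpath s t i p v \<Longrightarrow> k < d \<Longrightarrow> m \<le> pos k \<Longrightarrow> c (p, k) = 0"
  shows "emb v c \<in> F m v"
  unfolding emb_def
proof (intro subsp_sum[OF F_subsp[OF m]])
  fix k p assume k: "k \<in> {..<d}" and p: "p \<in> P i v"
  show "sc (c (p, k)) (pa (gen (pos k)) p) \<in> F m v"
  proof (cases "m \<le> pos k")
    case True
    then have "c (p, k) = 0" using c k p by simp
    then show ?thesis using subsp_zero[OF F_subsp[OF m]] by simp
  next
    case False
    then show ?thesis using pa_gen_F[of k p v m] k p m by (intro subsp_sc[OF F_subsp[OF m]]) auto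
  qed
qed

text \<open>One Delta(i)-step sees no relation among the transports of its generator modulo the
  earlier steps: this is the injectivity of its lift.\<close>
lemma single_step_free:
  assumes k0: "k0 < d" and inF: "(\<Sum>q\<in>P i v. sc (c q) (pa (gen (pos k0)) q)) \<in> F (pos k0) v"
    and p: "qpath s t i p v"
  shows "c p = 0"
proof -
  let ?l = "pos k0" and ?S = "\<Sum>q\<in>P i v. sc (c q) (pa (gen (pos k0)) q)"
  have l: "?l < r" and jl: "j ?l = i" using pos_lt pos_j k0 by auto
  define g where "g = (\<lambda>q. if qpath s t i q v then c q else 0)"
  have gv: "g \<in> vsp (Delta s t (j ?l)) v" by (auto simp: g_def vsp_def jl)
  have "(\<Sum>q\<in>P (j ?l) v. sc (g q) (pa (gen ?l) q)) = ?S"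
    unfolding jl by (intro sum.cong refl) (simp add: g_def)
  then have "lift ?l v g - ?S \<in> F ?l v"
    using lift_mod[OF l gv] by simp
  moreover have "subsp (vsp M v) (F ?l v)" using F_subsp l by simp
  ultimately have "(lift ?l v g - ?S) + ?S \<in> F ?l v"
    using subsp_add inF by blast
  then have "g = 0" using lift_inj[OF l gv] by simp
  then have "g p = 0" by simp
  then show "c p = 0" using p by (simp add: g_def)
qed

text \<open>Triangularity: if the image of c lies in F m, then c vanishes on all steps from m on.
  Otherwise look at the last step pos k1 carrying a nonzero coefficient; the contributions of
  the other steps lie in F (pos k1), so the k1-part alone does, contradicting the freeness of
  that step.\<close>
lemma emb_triangular:
  assumes m: "m \<le> r" and inF: "emb v c \<in> F m v" and p0: "qpath s t i p0 v" and k0: "k0 < d"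
    and mk: "m \<le> pos k0"
  shows "c (p0, k0) = 0"
proof (rule ccontr)
  assume nz: "c (p0, k0) \<noteq> 0"
  define S where "S = {pos k | k. k < d \<and> (\<exists>p\<in>P i v. c (p, k) \<noteq> 0)}"
  have finS: "finite S" unfolding S_def
    by (rule finite_subset[of _ "pos ` {..<d}"]) auto
  have "pos k0 \<in> S" unfolding S_def using k0 p0 nz by auto
  then have l0: "pos k0 \<le> Max S" "Max S \<in> S" using Max_ge[OF finS] Max_in[OF finS] by auto
  then obtain k1 p1 where k1: "k1 < d" "pos k1 = Max S" and p1: "qpath s t i p1 v" "c (p1, k1) \<noteq> 0"
    unfolding S_def by auto
  have l1: "pos k1 < r" using pos_lt[OF k1(1)] .
  have maxS: "pos k \<le> pos k1" if "k < d" "qpath s t i p v" "c (p, k) \<noteq> 0" for k p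
    unfolding k1(2) using finS that by (intro Max_ge) (auto simp: S_def)
  define c1 where "c1 = (\<lambda>(p, k). if k = k1 then 0 else c (p, k))"
  define c2 where "c2 = (\<lambda>(p, k). if k = k1 then c (p, k) else 0)"
  have Fk1: "subsp (vsp M v) (F (pos k1) v)" using F_subsp l1 by simp
  have "emb v c1 \<in> F (pos k1) v"
  proof (rule emb_in_F)
    fix p k assume p: "qpath s t i p v" and k: "k < d" and le: "pos k1 \<le> pos k"
    show "c1 (p, k) = 0"
    proof (cases "k = k1")
      case False
      then have "pos k1 < pos k" using le pos_inj[OF k k1(1)] by fastforce
      then have "c (p, k) = 0" using maxS[OF k p] by fastforce
      then show ?thesis by (simp add: c1_def)
    qed (simp add: c1_def)
  qed (use l1 in simp)
  moreover have "emb v c \<in> F (pos k1) v"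
  proof -
    have "m \<le> pos k1" using mk l0(1) k1(2) by simp
    then show ?thesis using F_mono[of m "pos k1" v] inF l1 by auto
  qed
  moreover have "emb v c = emb v c1 + emb v c2"
    unfolding emb_add[symmetric] by (rule arg_cong[where f = "emb v"]) (auto simp: c1_def c2_def)
  ultimately have "emb v c2 \<in> F (pos k1) v"
    using subsp_diff[OF Fk1] by (metis add_diff_cancel_left')
  moreover have "emb v c2 = (\<Sum>p\<in>P i v. sc (c (p, k1)) (pa (gen (pos k1)) p))"
  proof -
    have "c2 = (\<lambda>(p, k). if k = k1 then c (p, k1) else 0)"
      by (auto simp: c2_def fun_eq_iff)
    then show ?thesis using emb_single[OF k1(1), of v "\<lambda>p. c (p, k1)"] by simp
  qed
  ultimately show False using single_step_free[where c = "\<lambda>p. c (p, k1)"] k1(1) p1 by simp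
qed

definition Phi :: "'v \<Rightarrow> 'b \<Rightarrow> 'a list \<times> nat \<Rightarrow> 'k" where
  "Phi v y pk = pa (gen (pos (snd pk))) (fst pk) y"

lemma happ_Phi: "happ Di M Phi v = emb v"
proof (intro ext)
  fix c y
  show "happ Di M Phi v c y = emb v c y"
  proof (cases "y \<in> qbas M v")
    case True
    have "happ Di M Phi v c y = (\<Sum>(p, k)\<in>P i v \<times> {..<d}. pa (gen (pos k)) p y * c (p, k))"
      using True by (simp add: happ_def Phi_def case_prod_beta)
    also have "\<dots> = (\<Sum>k<d. \<Sum>p\<in>P i v. c (p, k) * pa (gen (pos k)) p y)"
      by (simp add: sum.cartesian_product[symmetric] sum.swap[of _ "P i v"] mult.commute)
    also have "\<dots> = emb v c y" by (simp add: emb_def sum_apply)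
    finally show ?thesis .
  next
    case False
    have "pa (gen (pos k)) p y = 0" if "k < d" "qpath s t i p v" for k p
      using path_act_vsp[OF gen_pos_vsp[OF that(1)] that(2)] False by (simp add: vsp_def)
    then show ?thesis using False by (simp add: happ_def emb_def sum_apply)
  qed
qed

text \<open>The embedding is a homomorphism: arrows of Q extend paths on both sides, and starred
  arrows act by zero on both sides, on the target because of the preprojective relations.\<close>
lemma Phi_hom: "is_hom s t Di M Phi"
proof (rule is_hom_basis)
  show "finite (qbas Di v)" for v using finP by simp
  fix a x assume "x \<in> qbas Di (ds s t a)"
  then obtain p k where pk: "x = (p, k)" "qpath s t i p (ds s t a)" "k < d" by auto
  show "happ Di M Phi (dt s t a) (act s t Di a (basis_fn x)) = act s t M a (happ Di M Phi (ds s t a) (basis_fn x))"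
  proof (cases a)
    case (Inl \<alpha>)
    with pk have "qpath s t i p (s \<alpha>)" "qpath s t i (p @ [\<alpha>]) (t \<alpha>)" by (simp_all add: qpath_snoc)
    then show ?thesis
      using pk Inl by (simp add: happ_Phi emb_basis act_Delta_pow_basis[OF finP])
  next
    case (Inr \<alpha>)
    with pk have "act s t M (Inr \<alpha>) (pa (gen (pos k)) p) = 0"
      using star_kills_source_paths[OF Dm src gen_pos_vsp] by simp
    then show ?thesis
      using pk Inr by (simp add: happ_Phi emb_basis act_Delta_pow_Inr)
  qed
qed

definition Dsub :: "'v \<Rightarrow> ('b \<Rightarrow> 'k) set" where
  "Dsub v = emb v ` vsp Di v"

text \<open>It is a submodule isomorphic to Delta(i)^d; injectivity comes from triangularity at m = 0.\<close>
lemma Dsub_submod: "submod s t M Dsub"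
  using hom_image_submod[OF Phi_hom] by (simp add: happ_Phi Dsub_def[abs_def])

lemma emb_inj: "inj_on (emb v) (vsp Di v)"
proof (rule inj_onI)
  fix c1 c2 assume c1: "c1 \<in> vsp Di v" and c2: "c2 \<in> vsp Di v" and eq: "emb v c1 = emb v c2"
  have "emb v (\<lambda>x. c1 x - c2 x) \<in> F 0 v" using eq by (simp add: emb_diff F0)
  then have "c1 (p, k) - c2 (p, k) = 0" if "qpath s t i p v" "k < d" for p k
    using emb_triangular[of 0 v "\<lambda>x. c1 x - c2 x" p k] that by simp
  then have "c1 x = c2 x" if "x \<in> qbas Di v" for x
    using that by (cases x) auto
  moreover have "c1 x = c2 x" if "x \<notin> qbas Di v" for x
    using that c1 c2 by (cases x) (auto simp: vsp_def)
  ultimately show "c1 = c2" by blast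
qed

lemma Dsub_iso: "iso_onto s t Di M Phi Dsub"
  unfolding iso_onto_def happ_Phi Dsub_def using Phi_hom emb_inj by simp

text \<open>At the source i only the Delta(i)-steps contribute: the part of F l at i is spanned by
  the generators of the earlier Delta(i)-steps.\<close>
lemma F_span_at_source: "l \<le> r \<Longrightarrow> F l i \<subseteq> fv.span (gen ` {l'. l' < l \<and> j l' = i})"
proof (induction l)
  case 0
  have "F 0 i = {0}" by (rule F0)
  then show ?case
    using fv.span_zero[of "gen ` {l'. l' < 0 \<and> j l' = i}"] by (simp only: insert_subset empty_subsetI simp_thms)
next
  case (Suc l)
  have l: "l < r" using Suc.prems by simp
  let ?B = "fv.span (gen ` {l'. l' < Suc l \<and> j l' = i})"
  have mono: "fv.span (gen ` {l'. l' < l \<and> j l' = i}) \<subseteq> ?B"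
    by (intro fv.span_mono) auto
  show ?case
  proof
    fix y assume y: "y \<in> F (Suc l) i"
    obtain g where g: "g \<in> vsp (Delta s t (j l)) i" and yg: "y - lift l i g \<in> F l i"
      using lift_onto[OF l y] by blast
    have "y - lift l i g \<in> ?B"
      using subsetD[OF mono subsetD[OF Suc.IH[OF less_imp_le[OF l]] yg]] .
    moreover have "lift l i g \<in> ?B"
    proof (cases "j l = i")
      case True
      have g_top: "g = sc (g []) (basis_fn [])"
        using g True P_to_source[of i] by (auto simp: vsp_def basis_fn_def fun_eq_iff)
      have "lift l i g = sc (g []) (gen l)"
        using True by (subst g_top) (simp add: happ_sc gen_def)
      then show ?thesis using True by (auto intro: fv.span_scale fv.span_base)
    next
      case False
      then have "g = 0" using g P_to_source[of "j l"] by (auto simp: vsp_def fun_eq_iff)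
      then show ?thesis by (simp add: fv.span_zero)
    qed
    ultimately have "(y - lift l i g) + lift l i g \<in> ?B" by (rule fv.span_add)
    then show "y \<in> ?B" by simp
  qed
qed

lemma vsp_source_span: "vsp M i \<subseteq> fv.span ((\<lambda>k. gen (pos k)) ` {..<d})"
proof -
  have "(\<lambda>k. gen (pos k)) ` {..<d} = gen ` {l. l < r \<and> j l = i}"
    using pos_bij by (simp add: bij_betw_def image_image[symmetric, of gen pos])
  then show ?thesis using F_span_at_source[of r] Fr by simp
qed

text \<open>Every submodule isomorphic to Delta(i)^d fills the whole space at the source i: it
  contains d independent vectors there, while M_i is spanned by d vectors.\<close>
lemma iso_full_at_source:
  assumes sub: "submod s t M U" and iso: "iso_onto s t Di M \<psi> U"
  shows "U i = vsp M i"
proof -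
  let ?T = "(\<lambda>k. gen (pos k)) ` {..<d}"
  obtain S where S: "S \<subseteq> U i" "fv.independent S" "card S = d"
    using iso_Delta_pow_top_independent[OF src iso] by blast
  have Usub: "fv.subspace (U i)" and Ui: "U i \<subseteq> vsp M i"
    using submod_subsp[OF sub, of i] by (simp_all add: subsp_iff)
  have "?T \<subseteq> fv.span S"
  proof (rule fv.independent_spans_smaller_spanning)
    show "S \<subseteq> fv.span ?T" using S(1) Ui vsp_source_span by blast
    show "card ?T \<le> card S" using S(3) card_image_le[of "{..<d}"] by simp
  qed (use S in simp_all)
  also have "fv.span S \<subseteq> U i" by (rule fv.span_minimal[OF S(1) Usub])
  finally have "fv.span ?T \<subseteq> U i" by (rule fv.span_minimal[OF _ Usub])
  then show ?thesis using vsp_source_span Ui by blast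
qed

text \<open>Uniqueness: two submodules isomorphic to Delta(i)^d agree at i, and each is generated by
  its part at i.\<close>
lemma Dsub_unique:
  assumes sub: "submod s t M U" and iso: "iso_onto s t Di M \<psi> U"
  shows "U = Dsub"
proof
  fix v
  have "U i = Dsub i"
    using iso_full_at_source[OF sub iso] iso_full_at_source[OF Dsub_submod Dsub_iso] by simp
  then show "U v = Dsub v"
    using iso_Delta_pow_generated[OF finP iso Dsub_submod, of v]
      iso_Delta_pow_generated[OF finP Dsub_iso sub, of v] by blast
qed

text \<open>The filtration of M / Dsub induced by F.\<close>
definition Fq :: "nat \<Rightarrow> 'v \<Rightarrow> ('b \<Rightarrow> 'k) set" where
  "Fq l v = {x + u | x u. x \<in> F l v \<and> u \<in> Dsub v}"

lemma Fq_submod: "l \<le> r \<Longrightarrow> submod s t M (Fq l)"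
  unfolding Fq_def[abs_def] by (rule submod_plus[OF F_submod Dsub_submod])

lemma Dsub_zero: "0 \<in> Dsub v"
  using subsp_zero[OF submod_subsp[OF Dsub_submod]] .

lemma F_Fq:
  assumes "x \<in> F l v" shows "x \<in> Fq l v"
proof -
  have "x + 0 \<in> Fq l v" unfolding Fq_def using assms Dsub_zero by blast
  then show ?thesis by simp
qed

lemma Fq_0: "Fq 0 = Dsub"
proof
  fix v
  have "Fq 0 v = (\<lambda>u. 0 + u) ` Dsub v" unfolding Fq_def F0 by blast
  then show "Fq 0 v = Dsub v" by simp
qed

lemma Fq_r: "Fq r = vsp M"
proof (intro ext equalityI)
  fix v
  show "Fq r v \<subseteq> vsp M v" using submod_subsp[OF Fq_submod[of r]] by (simp add: subsp_def)
  show "vsp M v \<subseteq> Fq r v"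
  proof
    fix y assume "y \<in> vsp M v"
    then have "y \<in> F r v" using Fr by simp
    then show "y \<in> Fq r v" by (rule F_Fq)
  qed
qed

lemma Fq_mono: "l < r \<Longrightarrow> Fq l v \<subseteq> Fq (Suc l) v"
  unfolding Fq_def using F_mono[of l "Suc l" v] by auto

text \<open>A Delta(i)-step disappears modulo Dsub: its lifts are congruent to images of the
  embedding.\<close>
lemma Fq_repeat:
  assumes l: "l < r" and jl: "j l = i"
  shows "Fq l = Fq (Suc l)"
proof (intro ext equalityI)
  fix v
  show "Fq l v \<subseteq> Fq (Suc l) v" using Fq_mono[OF l] .
  show "Fq (Suc l) v \<subseteq> Fq l v"
  proof
    fix y assume "y \<in> Fq (Suc l) v"
    then obtain x u where xu: "y = x + u" "x \<in> F (Suc l) v" "u \<in> Dsub v" unfolding Fq_def by blast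
    obtain g where g: "g \<in> vsp (Delta s t (j l)) v" and xg: "x - lift l v g \<in> F l v"
      using lift_onto[OF l xu(2)] by blast
    let ?S = "\<Sum>p\<in>P (j l) v. sc (g p) (pa (gen l) p)"
    obtain kl where kl: "kl < d" "pos kl = l" using pos_surj[OF l jl] by blast
    define c :: "'a list \<times> nat \<Rightarrow> 'k" where "c = (\<lambda>(p, k). if k = kl then g p else 0)"
    have "c \<in> vsp Di v" using g jl kl(1) unfolding vsp_def c_def by auto
    then have "emb v c \<in> Dsub v" unfolding Dsub_def by (rule imageI)
    moreover have "emb v c = ?S" using emb_single[OF kl(1), of v g] jl kl by (simp add: c_def)
    ultimately have "?S + u \<in> Dsub v"
      using subsp_add[OF submod_subsp[OF Dsub_submod] _ xu(3)] by simp
    moreover have "(x - lift l v g) + (lift l v g - ?S) \<in> F l v"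
      using subsp_add[OF F_subsp xg lift_mod[OF l g]] l by simp
    moreover have "y = ((x - lift l v g) + (lift l v g - ?S)) + (?S + u)"
      using xu(1) by (simp add: algebra_simps)
    ultimately show "y \<in> Fq l v" unfolding Fq_def by blast
  qed
qed

text \<open>A step with j l \<noteq> i keeps its lift injective modulo Dsub: by triangularity the Dsub-part
  of an element of Fq l lying in F (l+1) already lies in F l.\<close>
lemma lift_Fq_inj:
  assumes l: "l < r" and jl: "j l \<noteq> i" and g: "g \<in> vsp (Delta s t (j l)) v"
    and inFq: "lift l v g \<in> Fq l v"
  shows "g = 0"
proof -
  obtain x u where xu: "lift l v g = x + u" "x \<in> F l v" "u \<in> Dsub v"
    using inFq unfolding Fq_def by blast
  obtain c where c: "u = emb v c" using xu(3) unfolding Dsub_def by blast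
  define c1 where "c1 = (\<lambda>(p, k). if pos k < l then c (p, k) else 0)"
  define c2 where "c2 = (\<lambda>(p, k). if pos k < l then 0 else c (p, k))"
  have Fl: "subsp (vsp M v) (F (Suc l) v)" using F_subsp l by simp
  have "u = emb v c1 + emb v c2"
    unfolding c emb_add[symmetric] by (rule arg_cong[where f = "emb v"]) (auto simp: c1_def c2_def)
  moreover have W1: "emb v c1 \<in> F l v"
    by (rule emb_in_F) (use l in \<open>auto simp: c1_def\<close>)
  moreover have "x \<in> F (Suc l) v" "emb v c1 \<in> F (Suc l) v"
    using xu(2) W1 F_mono[of l "Suc l" v] l by auto
  moreover have "emb v c2 = (lift l v g - x) - emb v c1"
    using xu(1) \<open>u = emb v c1 + emb v c2\<close> by simp
  ultimately have "emb v c2 \<in> F (Suc l) v"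
    using subsp_diff[OF Fl subsp_diff[OF Fl lift_in[OF l g]]] by simp
  then have "emb v c2 = 0"
  proof (intro emb_zero)
    fix p k assume W2: "emb v c2 \<in> F (Suc l) v" and p: "qpath s t i p v" and k: "k < d"
    show "c2 (p, k) = 0"
    proof (cases "pos k < l")
      case False
      then have "Suc l \<le> pos k" using pos_j[OF k] jl by (cases "pos k = l") auto
      then show ?thesis using emb_triangular[OF _ W2 p k] l by simp
    qed (simp add: c2_def)
  qed
  then have "lift l v g \<in> F l v"
    using xu(1) subsp_add[OF F_subsp xu(2) W1] l \<open>u = emb v c1 + emb v c2\<close> by simp
  then show ?thesis using lift_inj[OF l g] by simp
qed

lemma Fq_step:
  assumes l: "l < r" and jl: "j l \<noteq> i"
  shows "subquot_iso s t M (Fq l) (Fq (Suc l)) (Delta s t (j l))"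
  unfolding subquot_iso_iff subquot_map_def
proof (intro exI[of _ "qmap l"] conjI allI impI)
  fix v and g :: "'a list \<Rightarrow> 'k" assume "g \<in> vsp (Delta s t (j l)) v"
  then show "lift l v g \<in> Fq (Suc l) v" by (rule F_Fq[OF lift_in[OF l]])
next
  fix v and g :: "'a list \<Rightarrow> 'k" assume "g \<in> vsp (Delta s t (j l)) v \<and> lift l v g \<in> Fq l v"
  then show "g = 0" using lift_Fq_inj[OF l jl] by blast
next
  fix v y assume "y \<in> Fq (Suc l) v"
  then obtain x u where xu: "y = x + u" "x \<in> F (Suc l) v" "u \<in> Dsub v" unfolding Fq_def by blast
  obtain g where g: "g \<in> vsp (Delta s t (j l)) v" and xg: "x - lift l v g \<in> F l v"
    using lift_onto[OF l xu(2)] by blast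
  have "y - lift l v g = (x - lift l v g) + u" using xu(1) by (simp add: algebra_simps)
  then have "y - lift l v g \<in> Fq l v" unfolding Fq_def using xg xu(3) by blast
  then show "\<exists>g\<in>vsp (Delta s t (j l)) v. y - lift l v g \<in> Fq l v" using g by blast
next
  fix a and g :: "'a list \<Rightarrow> 'k" assume "g \<in> vsp (Delta s t (j l)) (ds s t a)"
  then show "act s t M a (lift l (ds s t a) g) - lift l (dt s t a) (act s t (Delta s t (j l)) a g)
      \<in> Fq l (dt s t a)"
    by (rule F_Fq[OF lift_hom[OF l]])
qed

lemma quotient_filtration: "\<exists>r' F' j'. delta_filtration s t M Dsub r' F' j'"
proof -
  have "\<exists>r' F' j'. F' 0 = Fq 0 \<and> F' r' = Fq r \<and> delta_chain s t M r' F' j'"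
  proof (rule delta_chain_drop_repeats[where J = j])
    show "\<forall>l\<le>r. submod s t M (Fq l)" using Fq_submod by blast
    show "\<forall>l<r. \<forall>v. Fq l v \<subseteq> Fq (Suc l) v" using Fq_mono by blast
    show "\<forall>l<r. Fq l = Fq (Suc l) \<or> subquot_iso s t M (Fq l) (Fq (Suc l)) (Delta s t (j l))"
      using Fq_repeat Fq_step by blast
  qed
  then show ?thesis unfolding delta_filtration_iff Fq_0 Fq_r .
qed

end

theorem mainTheorem10:
  fixes s t :: "'a::finite \<Rightarrow> 'v::finite"
    and M :: "('v, 'a, 'b, 'k::field) qrep"
    and i :: 'v and r :: nat and F :: "nat \<Rightarrow> 'v \<Rightarrow> ('b \<Rightarrow> 'k) set" and j :: "nat \<Rightarrow> 'v"
    and d :: nat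
  assumes "alg_closed TYPE('k)"
    and "acyclic {(s a, t a) | a. True}"
    and "D_module s t M"
    and "\<forall>a. t a \<noteq> i"
    and "delta_filtration s t M (zero_sub M) r F j"
    and "d = card {l. l < r \<and> j l = i}"
    and "d > 0"
  shows "\<exists>U. submod s t M U \<and> (\<exists>\<phi>. iso_onto s t (Delta_pow s t i d) M \<phi> U) \<and>
           (\<forall>U'. submod s t M U' \<and> (\<exists>\<phi>. iso_onto s t (Delta_pow s t i d) M \<phi> U') \<longrightarrow> U' = U) \<and>
           (\<exists>r' F' j'. delta_filtration s t M U r' F' j')"
proof -
  interpret source_filtration s t M i r F j d
    using assms(2-6) by unfold_locales
  show ?thesis
  proof (intro exI[of _ Dsub] conjI allI impI)
    show "submod s t M Dsub" by (rule Dsub_submod)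
    show "\<exists>\<phi>. iso_onto s t (Delta_pow s t i d) M \<phi> Dsub" using Dsub_iso by blast
    show "\<exists>r' F' j'. delta_filtration s t M Dsub r' F' j'" by (rule quotient_filtration)
  next
    fix U' assume "submod s t M U' \<and> (\<exists>\<phi>. iso_onto s t (Delta_pow s t i d) M \<phi> U')"
    then show "U' = Dsub" using Dsub_unique by blast
  qed
qed

end
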